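(* Let $z,z',\ell \in \mathbb{N}$ and let $x\in \mathbb{R}^{z}$ and $x'\in \mathbb{R}^{z'}$ be two time series with the same set of $\ell$-profiles, i.e. $D_{(x,\ell)} = D_{(x',\ell)}$. Then for every $y \in \mathbb{R}^\ell$ we have $\mathbf{d}_{dF}(x,y) = \mathbf{d}_{dF}(x',y)$.
   Context: A traversal between sequences of lengths $z$ and $\ell$ is a sequence of index pairs $(i_1,j_1),\dots,(i_t,j_t)$ with $(i_1,j_1)=(1,1)$, $(i_t,j_t)=(z,\ell)$, and for $r<t$: $i_{r+1}-i_r\in\{0,1\}$, $j_{r+1}-j_r\in\{0,1\}$, $(i_{r+1}-i_r)+(j_{r+1}-j_r)\ge1$; $\mathcal{T}_{z,\ell}$ is the set of traversals. For $x\in\mathbb{R}^z$, $y\in\mathbb{R}^\ell$: $\mathbf{d}_{dF}(x,y)=\min_{T\in\mathcal{T}_{z,\ell}}\max_{(i,j)\in T}|x_i-y_j|$. For $x\in\mathbb{R}^z$ and $T\in\mathcal{T}_{z,\ell}$, the traversal sectors are $S_j^{(x,T)}=\{x_i: i\in[z],(i,j)\in T\}$ for $j\in[\ell]$, and the $\ell$-profile of $(x,T)$ is the sequence $\big((\min S_1^{(x,T)},\max S_1^{(x,T)}),\dots,(\min S_\ell^{(x,T)},\max S_\ell^{(x,T)})\big)$. $D_{(x,\ell)}$ is the set of all $\ell$-profiles of $(x,T)$ over all $T\in\mathcal{T}_{z,\ell}$. *)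

theory Defs
  imports Complex_Main
begin

text \<open>Time series are real lists; indices are 1-based as in the paper:
  entry i of x is x ! (i - 1). A traversal is a list of index pairs.\<close>

definition traversal :: "nat \<Rightarrow> nat \<Rightarrow> (nat \<times> nat) list \<Rightarrow> bool" where
  "traversal z l T \<longleftrightarrow>
     T \<noteq> [] \<and> hd T = (1, 1) \<and> last T = (z, l) \<and>
     (\<forall>r. Suc r < length T \<longrightarrow>
        (let (i, j) = T ! r; (i', j') = T ! Suc r in
          (i' = i \<or> i' = i + 1) \<and> (j' = j \<or> j' = j + 1) \<and> (i', j') \<noteq> (i, j)))"

definition traversals :: "nat \<Rightarrow> nat \<Rightarrow> (nat \<times> nat) list set" where
  "traversals z l = {T. traversal z l T}"

definition dF :: "real list \<Rightarrow> real list \<Rightarrow> real" where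
  "dF x y = Min ((\<lambda>T. Max ((\<lambda>(i, j). \<bar>x ! (i - 1) - y ! (j - 1)\<bar>) ` set T))
                  ` traversals (length x) (length y))"

definition sector :: "real list \<Rightarrow> (nat \<times> nat) list \<Rightarrow> nat \<Rightarrow> real set" where
  "sector x T j = {x ! (i - 1) | i. 1 \<le> i \<and> i \<le> length x \<and> (i, j) \<in> set T}"

definition profile :: "real list \<Rightarrow> nat \<Rightarrow> (nat \<times> nat) list \<Rightarrow> (real \<times> real) list" where
  "profile x l T = map (\<lambda>j. (Min (sector x T j), Max (sector x T j))) [1..<l + 1]"

definition profiles :: "real list \<Rightarrow> nat \<Rightarrow> (real \<times> real) list set" where
  "profiles x l = profile x l ` traversals (length x) l"

end

theory Submission
  imports Defs
begin

text \<open>The cost of a traversal T, the maximum of |x_i - y_j| over (i, j) in T, depends only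
  on the l-profile of (x, T): grouping the pairs by j, the largest deviation from y_j within the
  sector S_j is attained at min S_j or at max S_j, and no sector is empty because a traversal
  visits every j in [l]. Hence d_dF(x, y) is the minimum of one fixed function of the profile
  over D_(x,l).\<close>

lemma traversal_step:
  assumes "traversal z l T" "Suc r < length T"
  shows "fst (T ! Suc r) \<in> {fst (T ! r), fst (T ! r) + 1}"
    and "snd (T ! Suc r) \<in> {snd (T ! r), snd (T ! r) + 1}"
  using assms unfolding traversal_def
  by (cases "T ! r"; cases "T ! Suc r"; fastforce simp: Let_def)+

lemma sorted_traversal:
  assumes "traversal z l T"
  shows "sorted (map fst T)" "sorted (map snd T)"
  using traversal_step[OF assms] by (fastforce simp: sorted_iff_nth_Suc)+

lemma traversal_bounds:
  assumes "traversal z l T" "(i, j) \<in> set T"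
  shows "1 \<le> i \<and> i \<le> z \<and> 1 \<le> j \<and> j \<le> l"
proof -
  obtain r where r: "r < length T" "T ! r = (i, j)"
    using assms(2) by (auto simp: in_set_conv_nth)
  have ends: "T \<noteq> []" "T ! 0 = (1, 1)" "T ! (length T - 1) = (z, l)"
    using assms(1) unfolding traversal_def by (auto simp: hd_conv_nth last_conv_nth)
  have "f (T ! 0) \<le> f (T ! r) \<and> f (T ! r) \<le> f (T ! (length T - 1))"
    if "sorted (map f T)" for f :: "nat \<times> nat \<Rightarrow> nat"
    using sorted_nth_mono[OF that, of 0 r] sorted_nth_mono[OF that, of r "length T - 1"]
      r(1) ends(1)
    by simp
  with sorted_traversal[OF assms(1)] show ?thesis
    using r ends by fastforce
qed

lemma traversal_visits_column:
  assumes "traversal z l T" "1 \<le> j" "j \<le> l"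
  shows "\<exists>i. (i, j) \<in> set T"
proof -
  define n where "n = length T - 1"
  have T: "T \<noteq> []" "snd (T ! 0) = 1" "snd (T ! n) = l"
    using assms(1) unfolding traversal_def n_def by (auto simp: hd_conv_nth last_conv_nth)
  have "\<bar>int (snd (T ! Suc r)) - int (snd (T ! r))\<bar> \<le> 1" if "r < n" for r
  proof -
    have "Suc r < length T"
      using that n_def by simp
    then show ?thesis
      using traversal_step(2)[OF assms(1)] by fastforce
  qed
  then obtain r where "r \<le> n" "int (snd (T ! r)) = int j"
    using nat0_intermed_int_val[of n "\<lambda>r. int (snd (T ! r))" "int j"] T assms(2,3) by force
  moreover have "r < length T"
    using \<open>r \<le> n\<close> T(1) unfolding n_def by (cases T) auto
  ultimately have "T ! r \<in> set T" "snd (T ! r) = j"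
    by auto
  then show ?thesis
    by (metis prod.collapse)
qed

lemma finite_sector: "finite (sector x T j)"
proof -
  have "sector x T j \<subseteq> (\<lambda>i. x ! (i - 1)) ` {1..length x}"
    unfolding sector_def by auto
  then show ?thesis
    by (rule finite_subset) simp
qed

lemma sector_nonempty:
  assumes "traversal (length x) l T" "1 \<le> j" "j \<le> l"
  shows "sector x T j \<noteq> {}"
  using traversal_visits_column[OF assms] traversal_bounds[OF assms(1)]
  unfolding sector_def by blast

lemma nth_profile:
  assumes "1 \<le> j" "j \<le> l"
  shows "profile x l T ! (j - 1) = (Min (sector x T j), Max (sector x T j))"
proof -
  have "[1..<l + 1] ! (j - 1) = j"
    using assms by (subst nth_upt) auto
  then show ?thesis
    using assms unfolding profile_def by (simp del: upt_Suc)
qed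

lemma Max_UNION:
  fixes A :: "'i \<Rightarrow> 'a :: linorder set"
  assumes "finite I" "I \<noteq> {}" "\<And>i. i \<in> I \<Longrightarrow> finite (A i)" "\<And>i. i \<in> I \<Longrightarrow> A i \<noteq> {}"
  shows "Max (\<Union>i\<in>I. A i) = Max ((\<lambda>i. Max (A i)) ` I)"
proof (rule antisym)
  have "a \<le> Max ((\<lambda>i. Max (A i)) ` I)" if "i \<in> I" "a \<in> A i" for i a
    using that assms by (meson Max_ge finite_imageI image_eqI order_trans)
  then show "Max (\<Union>i\<in>I. A i) \<le> Max ((\<lambda>i. Max (A i)) ` I)"
    using assms by (subst Max_le_iff) auto
  have "Max (A i) \<le> Max (\<Union>i\<in>I. A i)" if "i \<in> I" for i
    using that assms by (intro Max_mono) auto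
  then show "Max ((\<lambda>i. Max (A i)) ` I) \<le> Max (\<Union>i\<in>I. A i)"
    using assms by (subst Max_le_iff) auto
qed

lemma Max_abs_diff_image:
  fixes S :: "'a :: linordered_idom set"
  assumes "finite S" "S \<noteq> {}"
  shows "Max ((\<lambda>s. \<bar>s - c\<bar>) ` S) = max \<bar>Min S - c\<bar> \<bar>Max S - c\<bar>"
proof (rule Max_eqI)
  show "finite ((\<lambda>s. \<bar>s - c\<bar>) ` S)"
    using assms(1) by simp
  show "d \<le> max \<bar>Min S - c\<bar> \<bar>Max S - c\<bar>" if d: "d \<in> (\<lambda>s. \<bar>s - c\<bar>) ` S" for d
  proof -
    obtain s where "s \<in> S" "d = \<bar>s - c\<bar>"
      using d by auto
    moreover from \<open>s \<in> S\<close> have "Min S \<le> s" "s \<le> Max S"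
      using assms(1) by simp_all
    ultimately show ?thesis
      by (simp add: abs_le_iff le_max_iff_disj) linarith
  qed
  show "max \<bar>Min S - c\<bar> \<bar>Max S - c\<bar> \<in> (\<lambda>s. \<bar>s - c\<bar>) ` S"
    using assms by (simp add: max_def)
qed

definition profile_cost :: "real list \<Rightarrow> (real \<times> real) list \<Rightarrow> real" where
  "profile_cost y p =
     Max ((\<lambda>j. max \<bar>fst (p ! (j - 1)) - y ! (j - 1)\<bar> \<bar>snd (p ! (j - 1)) - y ! (j - 1)\<bar>)
          ` {1..length y})"

lemma traversal_cost_eq_profile_cost:
  assumes T: "traversal (length x) (length y) T"
  shows "Max ((\<lambda>(i, j). \<bar>x ! (i - 1) - y ! (j - 1)\<bar>) ` set T)
           = profile_cost y (profile x (length y) T)"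
proof -
  let ?l = "length y"
  have "(1, 1) \<in> set T"
    using T unfolding traversal_def by (metis hd_in_set)
  then have "?l \<ge> 1"
    using traversal_bounds[OF T] by blast
  have "(\<lambda>(i, j). \<bar>x ! (i - 1) - y ! (j - 1)\<bar>) ` set T
          = (\<Union>j\<in>{1..?l}. (\<lambda>s. \<bar>s - y ! (j - 1)\<bar>) ` sector x T j)"
    using traversal_bounds[OF T] unfolding sector_def by fastforce
  also have "Max \<dots> = Max ((\<lambda>j. Max ((\<lambda>s. \<bar>s - y ! (j - 1)\<bar>) ` sector x T j)) ` {1..?l})"
    using \<open>?l \<ge> 1\<close> sector_nonempty[OF T] by (intro Max_UNION) (auto simp: finite_sector)
  also have "\<dots> = profile_cost y (profile x ?l T)"
    unfolding profile_cost_def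
  proof (intro arg_cong[where f = Max] image_cong refl)
    fix j assume j: "j \<in> {1..?l}"
    then have "profile x ?l T ! (j - 1) = (Min (sector x T j), Max (sector x T j))"
      by (intro nth_profile) auto
    with j show "Max ((\<lambda>s. \<bar>s - y ! (j - 1)\<bar>) ` sector x T j)
        = max \<bar>fst (profile x ?l T ! (j - 1)) - y ! (j - 1)\<bar>
              \<bar>snd (profile x ?l T ! (j - 1)) - y ! (j - 1)\<bar>"
      using sector_nonempty[OF T] by (simp add: Max_abs_diff_image finite_sector)
  qed
  finally show ?thesis .
qed

lemma dF_eq_Min_profile_cost: "dF x y = Min (profile_cost y ` profiles x (length y))"
proof -
  have "(\<lambda>T. Max ((\<lambda>(i, j). \<bar>x ! (i - 1) - y ! (j - 1)\<bar>) ` set T)) ` traversals (length x) (length y)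
          = (profile_cost y \<circ> profile x (length y)) ` traversals (length x) (length y)"
    using traversal_cost_eq_profile_cost by (intro image_cong) (auto simp: traversals_def)
  then show ?thesis
    unfolding dF_def profiles_def by (simp add: image_comp)
qed

theorem lemma9p9:
  fixes x x' y :: "real list" and l :: nat
  assumes "profiles x l = profiles x' l"
    and "length y = l"
  shows "dF x y = dF x' y"
  using assms by (simp add: dF_eq_Min_profile_cost)

end
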